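(* Let $N\ge3$ and let $K=[-1/N,1/N]\times[-N,N]\subseteq\mathbb R^2$ and $T=[-N,N]\times[-1/N,1/N]\subseteq\mathbb R^2$. Then \[ \gamma_2(\mathrm{conv}\{K\cup T\})\,\gamma_2(K\cap T)<\gamma_2(K)\,\gamma_2(T). \]
   Context: $\gamma_2$ denotes the standard Gaussian probability measure on $\mathbb R^2$, with density proportional to $e^{-\|x\|^2/2}$. $\mathrm{conv}\{S\}$ is the convex hull of $S$. *)

theory Defs
  imports "HOL-Analysis.Analysis"
begin

definition gauss2 :: "(real^2) measure" where
  "gauss2 = density lborel (\<lambda>x. ennreal (exp (- (norm x)\<^sup>2 / 2) / (2 * pi)))"

definition gamma2 :: "(real^2) set \<Rightarrow> real" where
  "gamma2 A = measure gauss2 A"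

definition rect :: "real \<Rightarrow> real \<Rightarrow> real \<Rightarrow> real \<Rightarrow> (real^2) set" where
  "rect a b c d = {x. a \<le> x$1 \<and> x$1 \<le> b \<and> c \<le> x$2 \<and> x$2 \<le> d}"

end

theory Submission
  imports Defs "HOL-Probability.Distributions"
begin

text \<open>The Gaussian measure of K and T is a product of one-dimensional Gaussian measures, so
  \<open>\<gamma>\<^sub>2(K) \<gamma>\<^sub>2(T) = \<gamma>\<^sub>2([-N,N]\<^sup>2) \<gamma>\<^sub>2(K \<inter> T)\<close>.
  It therefore suffices to see that the convex hull of the cross \<open>K \<union> T\<close> misses a set of positive
  measure inside the square \<open>[-N,N]\<^sup>2\<close>: the hull lies in the octagon cut out by
  \<open>|x\<^sub>1|, |x\<^sub>2| \<le> N\<close> and \<open>|x\<^sub>1 \<plusminus> x\<^sub>2| \<le> N + 1/N\<close>, which avoids the corner square \<open>[N - 1/2, N]\<^sup>2\<close>.\<close>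

definition gauss1 :: "real measure" where
  "gauss1 = density lborel std_normal_density"

interpretation gauss1: prob_space gauss1
  unfolding gauss1_def by (rule prob_space_normal_density) simp

lemma gauss2_density_eq_product:
  "exp (- (norm (x::real^2))\<^sup>2 / 2) / (2 * pi) = std_normal_density (x$1) * std_normal_density (x$2)"
proof -
  have "(norm x)\<^sup>2 = (x$1)\<^sup>2 + (x$2)\<^sup>2"
    unfolding power2_norm_eq_inner inner_vec_def UNIV_2 by (simp add: power2_eq_square)
  moreover have "sqrt (2 * pi) * sqrt (2 * pi) = 2 * pi" by simp
  ultimately show ?thesis
    by (simp add: std_normal_density_def exp_add[symmetric] field_simps)
qed

lemma sets_gauss2: "sets gauss2 = sets borel"
  by (simp add: gauss2_def)

lemma rect_in_sets_gauss2: "rect a b c d \<in> sets gauss2"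
proof -
  have "closed (rect a b c d)"
    unfolding rect_def by (intro closed_Collect_conj closed_Collect_le continuous_intros)
  then show ?thesis by (simp add: sets_gauss2 borel_closed)
qed

lemma emeasure_gauss2_rect:
  "emeasure gauss2 (rect a b c d) = emeasure gauss1 {a..b} * emeasure gauss1 {c..d}"
proof -
  have Basis: "(Basis :: (real^2) set) = {axis 1 1, axis 2 1}"
    by (auto simp: Basis_vec_def UNIV_2)
  have axes_distinct: "axis 1 (1::real) \<noteq> (axis 2 1 :: real^2)"
    by (simp add: axis_eq_axis)
  define f :: "real^2 \<Rightarrow> real \<Rightarrow> ennreal" where
    "f = (\<lambda>i t. ennreal (std_normal_density t * indicator (if i = axis 1 1 then {a..b} else {c..d}) t))"
  have "emeasure gauss2 (rect a b c d) =
      (\<integral>\<^sup>+x. ennreal (exp (- (norm x)\<^sup>2 / 2) / (2 * pi)) * indicator (rect a b c d) x \<partial>lborel)"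
    using rect_in_sets_gauss2 unfolding gauss2_def by (subst emeasure_density) auto
  also have "\<dots> = (\<integral>\<^sup>+x. (\<Prod>i\<in>Basis. f i (x \<bullet> i)) \<partial>lborel)"
    unfolding Basis f_def gauss2_density_eq_product using axes_distinct
    by (intro nn_integral_cong) (simp add: inner_axis rect_def indicator_def ennreal_mult)
  also have "\<dots> = (\<Prod>i\<in>Basis. \<integral>\<^sup>+t. f i t \<partial>lborel)"
    by (rule nn_integral_lborel_prod) (auto simp: f_def)
  also have "\<dots> = emeasure gauss1 {a..b} * emeasure gauss1 {c..d}"
    unfolding Basis f_def gauss1_def using axes_distinct
    by (simp add: emeasure_density ennreal_mult' ennreal_indicator mult.commute)
  finally show ?thesis .
qed

lemma gamma2_rect: "gamma2 (rect a b c d) = measure gauss1 {a..b} * measure gauss1 {c..d}"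
  unfolding gamma2_def measure_def emeasure_gauss2_rect by (simp add: enn2real_mult)

lemma emeasure_gauss2_rect_finite: "emeasure gauss2 (rect a b c d) \<noteq> \<infinity>"
  by (simp add: emeasure_gauss2_rect ennreal_mult_eq_top_iff)

lemma measure_gauss1_pos:
  assumes "a < b"
  shows "0 < measure gauss1 {a..b}"
proof -
  have "emeasure gauss1 {a..b} \<noteq> 0"
  proof
    assume "emeasure gauss1 {a..b} = 0"
    then have "AE t in lborel. a \<le> t \<longrightarrow> std_normal_density t = 0 \<or> \<not> t \<le> b"
      unfolding gauss1_def by (simp add: emeasure_density nn_integral_0_iff_AE indicator_def)
    then have "AE t in lborel. t \<notin> {a..b}"
      by eventually_elim (auto simp: std_normal_density_def)
    then have "emeasure lborel {a..b} = 0"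
      by (subst AE_iff_measurable[symmetric]) auto
    with assms show False by simp
  qed
  then show ?thesis
    by (simp add: measure_def enn2real_positive_iff zero_less_iff_neq_zero less_top[symmetric])
qed

lemma gamma2_less_rect_minus_rect:
  assumes "A \<subseteq> rect a b c d - rect a' b' c' d'" and "rect a' b' c' d' \<subseteq> rect a b c d"
    and "a' < b'" and "c' < d'"
  shows "gamma2 A < gamma2 (rect a b c d)"
proof -
  let ?S = "rect a b c d" and ?R = "rect a' b' c' d'"
  have "emeasure gauss2 (?S - ?R) \<le> emeasure gauss2 ?S"
    using rect_in_sets_gauss2 by (intro emeasure_mono) auto
  then have "emeasure gauss2 (?S - ?R) < \<infinity>"
    using emeasure_gauss2_rect_finite by (simp add: le_less_trans less_top)
  then have "gamma2 A \<le> gamma2 (?S - ?R)"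
    unfolding gamma2_def measure_def using assms(1) rect_in_sets_gauss2
    by (intro enn2real_mono emeasure_mono) auto
  also have "\<dots> = gamma2 ?S - gamma2 ?R"
    unfolding gamma2_def using assms(2) emeasure_gauss2_rect_finite rect_in_sets_gauss2
    by (intro measure_Diff) auto
  also have "\<dots> < gamma2 ?S"
    using assms(3,4) measure_gauss1_pos by (simp add: gamma2_rect)
  finally show ?thesis .
qed

definition octagon :: "real \<Rightarrow> real \<Rightarrow> (real^2) set" where
  "octagon r s = {x. \<bar>x$1\<bar> \<le> r \<and> \<bar>x$2\<bar> \<le> r \<and> \<bar>x$1 + x$2\<bar> \<le> s \<and> \<bar>x$1 - x$2\<bar> \<le> s}"

lemma convex_octagon: "convex (octagon r s)"
proof -
  have slab: "{x::real^2. \<bar>p * x$1 + q * x$2\<bar> \<le> t} = {x. \<bar>inner (vector [p, q]) x\<bar> \<le> t}"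
    for p q t :: real
    by (simp add: inner_vec_def UNIV_2 mult.commute)
  have "octagon r s = {x. \<bar>1 * x$1 + 0 * x$2\<bar> \<le> r} \<inter> {x. \<bar>0 * x$1 + 1 * x$2\<bar> \<le> r}
      \<inter> {x. \<bar>1 * x$1 + 1 * x$2\<bar> \<le> s} \<inter> {x. \<bar>1 * x$1 + (-1) * x$2\<bar> \<le> s}"
    by (auto simp: octagon_def)
  then show ?thesis
    unfolding slab by (simp add: convex_Int convex_halfspace_abs_le)
qed

lemma convex_hull_cross_subset_octagon:
  assumes "0 \<le> e" and "e \<le> r"
  shows "convex hull (rect (-e) e (-r) r \<union> rect (-r) r (-e) e) \<subseteq> octagon r (r + e)"
  using assms by (intro hull_minimal convex_octagon) (auto simp: rect_def octagon_def)

lemma octagon_disjoint_corner: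
  assumes "s < 2 * c"
  shows "octagon r s \<inter> rect c d c d = {}"
  using assms by (auto simp: octagon_def rect_def)

theorem mainTheorem8:
  fixes N :: real
  assumes "N \<ge> 3"
  defines "K \<equiv> rect (-1/N) (1/N) (-N) N"
      and "T \<equiv> rect (-N) N (-1/N) (1/N)"
  shows "gamma2 (convex hull (K \<union> T)) * gamma2 (K \<inter> T) < gamma2 K * gamma2 T"
proof -
  define e where "e = 1 / N"
  have e: "0 < e" "e \<le> 1/3" "-1/N = -e" "e \<le> N"
    unfolding e_def using assms(1) mult_mono[of 1 N 1 N] by (auto simp: divide_le_eq)
  have "convex hull (K \<union> T) \<subseteq> octagon N (N + e)"
    unfolding K_def T_def e(3) e_def[symmetric] using e assms(1)
    by (intro convex_hull_cross_subset_octagon) auto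
  moreover have "octagon N (N + e) \<subseteq> rect (-N) N (-N) N"
    by (auto simp: octagon_def rect_def)
  moreover have "octagon N (N + e) \<inter> rect (N - 1/2) N (N - 1/2) N = {}"
    using e assms(1) by (intro octagon_disjoint_corner) auto
  ultimately have hull: "gamma2 (convex hull (K \<union> T)) < gamma2 (rect (-N) N (-N) N)"
    using assms(1) by (intro gamma2_less_rect_minus_rect) (auto simp: rect_def)
  have "K \<inter> T = rect (-e) e (-e) e"
    unfolding K_def T_def e(3) e_def[symmetric] rect_def using e(1,4) by auto
  then have "gamma2 (K \<inter> T) > 0"
    using e(1) measure_gauss1_pos[of "-e" e] by (simp add: gamma2_rect)
  with hull have "gamma2 (convex hull (K \<union> T)) * gamma2 (K \<inter> T)
      < gamma2 (rect (-N) N (-N) N) * gamma2 (rect (-e) e (-e) e)"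
    by (simp add: \<open>K \<inter> T = rect (-e) e (-e) e\<close>)
  also have "\<dots> = gamma2 K * gamma2 T"
    unfolding K_def T_def e(3) e_def[symmetric] gamma2_rect by (simp add: mult_ac)
  finally show ?thesis .
qed

end
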